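(* Let $X$ be an almost zero-dimensional space and $A\subset X$. If there is a $\sigma$C-set $B$ in $X$ with $\partial A\subset B\subset\overline A$, then $\overline A$ is a C-set in $X$.
   Context: All spaces are separable and metrizable. A subset $A$ of a space $X$ is a C-set in $X$ if $A$ is an intersection of clopen subsets of $X$; a $\sigma$C-set is a countable union of C-sets. $X$ is almost zero-dimensional if every point of $X$ has a neighborhood basis consisting of C-sets in $X$. $\partial A$ denotes the boundary of $A$ in $X$. *)

theory Defs
  imports "HOL-Analysis.Analysis"
begin

text \<open>A C-set in X: an intersection of clopen subsets of X (the empty intersection
  being the whole space).\<close>
definition C_set :: "'a topology \<Rightarrow> 'a set \<Rightarrow> bool" where
  "C_set X A \<longleftrightarrow>
     (\<exists>\<U>. (\<forall>U\<in>\<U>. closedin X U \<and> openin X U) \<and> A = topspace X \<inter> \<Inter>\<U>)"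

definition sigmaC_set :: "'a topology \<Rightarrow> 'a set \<Rightarrow> bool" where
  "sigmaC_set X B \<longleftrightarrow>
     (\<exists>\<C>. countable \<C> \<and> (\<forall>C\<in>\<C>. C_set X C) \<and> B = \<Union>\<C>)"

definition almost_zero_dimensional :: "'a topology \<Rightarrow> bool" where
  "almost_zero_dimensional X \<longleftrightarrow>
     (\<forall>x\<in>topspace X. \<forall>U. openin X U \<and> x \<in> U \<longrightarrow>
        (\<exists>V. C_set X V \<and> x \<in> X interior_of V \<and> V \<subseteq> U))"

end

theory Submission
  imports Defs
begin

text \<open>Let \<open>F\<close> be the closure of \<open>A\<close>; for every point \<open>x \<notin> F\<close> we find a clopen \<open>W \<supseteq> F\<close> missing \<open>x\<close>.
  Cover the open set \<open>X - F\<close> by C-sets \<open>v\<^sub>0 \<ni> x, v\<^sub>1, \<dots>\<close> whose interiors cover it (using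
  almost zero-dimensionality and second countability), and write \<open>B\<close> as a union of C-sets
  \<open>b\<^sub>m \<subseteq> F\<close>. In a Lindelof space disjoint C-sets are separated by clopen sets, so there are
  clopen \<open>D\<^sub>m \<supseteq> b\<^sub>m\<close> disjoint from \<open>v\<^sub>0, \<dots>, v\<^sub>m\<close>. Since \<open>\<partial>A \<subseteq> B\<close>, the set
  \<open>W = F \<union> \<Union>\<^sub>m D\<^sub>m\<close> equals \<open>int A \<union> \<Union>\<^sub>m D\<^sub>m\<close> and is therefore open; it is closed because
  the \<open>D\<^sub>m\<close> form a locally finite family on \<open>X - F\<close>.\<close>

lemma separable_metrizable_imp_second_countable:
  assumes "separable_space X" and "metrizable_space X"
  shows "second_countable X"
proof -
  obtain M d where "Metric_space M d" and X: "X = Metric_space.mtopology M d"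
    using assms(2) metrizable_space_def by blast
  interpret Metric_space M d by fact
  obtain C where C: "countable C" "C \<subseteq> M" "mtopology closure_of C = M"
    using assms(1) unfolding separable_space_def X by auto
  define \<B> where "\<B> = (\<lambda>(c, n). mball c (1 / Suc n)) ` (C \<times> (UNIV :: nat set))"
  show ?thesis
    unfolding second_countable_def X
  proof (intro exI[of _ \<B>] conjI allI impI ballI)
    show "countable \<B>"
      unfolding \<B>_def using C(1) by simp
    show "openin mtopology V" if "V \<in> \<B>" for V
      using that by (auto simp: \<B>_def)
  next
    fix U x
    assume "openin mtopology U \<and> x \<in> U"
    then obtain r where "r > 0" and r: "mball x r \<subseteq> U" and "x \<in> M"
      using openin_mtopology by blast
    then obtain n where n: "inverse (Suc n) < r / 2"
      using reals_Archimedean half_gt_zero_iff by blast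
    have "x \<in> mtopology closure_of C"
      using C(3) \<open>x \<in> M\<close> by simp
    then have "\<forall>\<epsilon>>0. \<exists>c\<in>C. c \<in> mball x \<epsilon>"
      unfolding metric_closure_of by blast
    then obtain c where "c \<in> C" and c: "c \<in> mball x (1 / Suc n)"
      by (meson of_nat_0_less_iff zero_less_Suc zero_less_divide_1_iff)
    have "x \<in> mball c (1 / Suc n)"
      using c \<open>x \<in> M\<close> by (simp add: commute)
    moreover have "mball c (1 / Suc n) \<subseteq> mball x r"
    proof (rule mball_subset)
      show "d c x + 1 / Suc n \<le> r"
        using c n by (simp add: commute field_simps)
    qed fact
    moreover have "mball c (1 / Suc n) \<in> \<B>"
      using \<open>c \<in> C\<close> by (auto simp: \<B>_def)
    ultimately show "\<exists>V\<in>\<B>. x \<in> V \<and> V \<subseteq> U"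
      using r by blast
  qed
qed

lemma C_set_iff_clopen_separation:
  "C_set X F \<longleftrightarrow> F \<subseteq> topspace X \<and>
     (\<forall>x \<in> topspace X - F. \<exists>W. closedin X W \<and> openin X W \<and> F \<subseteq> W \<and> x \<notin> W)"
proof
  assume "C_set X F"
  then obtain \<U> where "\<forall>U\<in>\<U>. closedin X U \<and> openin X U" and "F = topspace X \<inter> \<Inter>\<U>"
    unfolding C_set_def by blast
  then show "F \<subseteq> topspace X \<and>
     (\<forall>x \<in> topspace X - F. \<exists>W. closedin X W \<and> openin X W \<and> F \<subseteq> W \<and> x \<notin> W)"
    by blast
next
  assume sep: "F \<subseteq> topspace X \<and>
     (\<forall>x \<in> topspace X - F. \<exists>W. closedin X W \<and> openin X W \<and> F \<subseteq> W \<and> x \<notin> W)"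
  show "C_set X F"
    unfolding C_set_def
    by (rule exI[of _ "{W. closedin X W \<and> openin X W \<and> F \<subseteq> W}"]) (use sep in blast)
qed

lemma sigmaC_set_range:
  assumes "sigmaC_set X B"
  obtains b :: "nat \<Rightarrow> 'a set" where "\<And>m. C_set X (b m)" and "B = (\<Union>m. b m)"
proof -
  obtain \<C> where "countable \<C>" and \<C>: "\<forall>C\<in>\<C>. C_set X C" and B: "B = \<Union>\<C>"
    using assms unfolding sigmaC_set_def by blast
  \<comment> \<open>Adding the empty C-set makes the family nonempty, so that it can be enumerated.\<close>
  then have "range (from_nat_into (insert {} \<C>)) = insert {} \<C>"
    by (simp add: range_from_nat_into)
  moreover have "C_set X {}"
    unfolding C_set_def by (intro exI[of _ "{{}}"]) auto
  ultimately show thesis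
    using \<C> B by (intro that[of "from_nat_into (insert {} \<C>)"]) (metis insert_iff rangeI, auto)
qed

lemma closedin_Union_open_partition:
  assumes "\<And>P. P \<in> \<P> \<Longrightarrow> openin X P" and "disjoint \<P>" and "\<Union>\<P> = topspace X"
    and "\<S> \<subseteq> \<P>"
  shows "closedin X (\<Union>\<S>)"
proof -
  have "topspace X - \<Union>\<S> = \<Union>(\<P> - \<S>)"
    using assms(3,4) disjointD[OF assms(2)] by blast
  moreover have "openin X (\<Union>(\<P> - \<S>))"
    using assms(1) by (intro openin_Union) blast
  moreover have "\<Union>\<S> \<subseteq> topspace X"
    using assms(3,4) by blast
  ultimately show ?thesis
    by (simp add: closedin_def)
qed

lemma countable_clopen_cover_refines_to_partition:
  assumes "countable \<G>" and "\<And>G. G \<in> \<G> \<Longrightarrow> closedin X G \<and> openin X G"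
    and "\<Union>\<G> = topspace X"
  obtains \<P> where "\<And>P. P \<in> \<P> \<Longrightarrow> closedin X P \<and> openin X P" and "disjoint \<P>"
    and "\<Union>\<P> = topspace X" and "\<And>P. P \<in> \<P> \<Longrightarrow> \<exists>G\<in>\<G>. P \<subseteq> G"
proof -
  define g where "g = from_nat_into (insert {} \<G>)"
  have g: "range g = insert {} \<G>"
    unfolding g_def using assms(1) by simp
  then have clopen_g: "closedin X (g n) \<and> openin X (g n)" for n
    using assms(2) by (metis closedin_empty insertE openin_empty rangeI)
  have "closedin X (disjointed g n) \<and> openin X (disjointed g n)" for n
    unfolding disjointed_def using clopen_g
    by (intro conjI closedin_diff openin_diff openin_Union closedin_Union) auto
  moreover have "disjoint (range (disjointed g) - {{}})"
    by (rule pairwise_subset[OF disjoint_family_on_disjoint_image[OF disjoint_family_disjointed]])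
      blast
  moreover have "\<Union>(range (disjointed g) - {{}}) = topspace X"
  proof -
    have "\<Union>(range (disjointed g) - {{}}) = (\<Union>n. disjointed g n)"
      by blast
    also have "\<dots> = \<Union>(insert {} \<G>)"
      by (simp only: UN_disjointed_eq g)
    finally show ?thesis
      using assms(3) by simp
  qed
  moreover have "\<exists>G\<in>\<G>. disjointed g n \<subseteq> G" if "disjointed g n \<noteq> {}" for n
    using that g disjointed_subset[of g n] by blast
  ultimately show thesis
    by (intro that[of "range (disjointed g) - {{}}"]) auto
qed

lemma C_set_clopen_neighbourhood_avoiding:
  assumes "C_set X K" and "x \<in> topspace X" and "x \<notin> K"
  obtains G where "closedin X G" and "openin X G" and "x \<in> G" and "G \<inter> K = {}"
proof -
  obtain W where "closedin X W" and "openin X W" and "K \<subseteq> W" and "x \<notin> W"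
    using assms unfolding C_set_iff_clopen_separation by blast
  then show thesis
    using assms(2) by (intro that[of "topspace X - W"]) auto
qed

lemma Lindelof_space_clopen_separation_of_C_sets:
  assumes "Lindelof_space X" and "C_set X K" and "C_set X L" and "K \<inter> L = {}"
  obtains D where "closedin X D" and "openin X D" and "K \<subseteq> D" and "D \<inter> L = {}"
proof -
  define \<G> where "\<G> = {G. closedin X G \<and> openin X G \<and> (G \<inter> K = {} \<or> G \<inter> L = {})}"
  have "\<exists>G\<in>\<G>. x \<in> G" if "x \<in> topspace X" for x
  proof (cases "x \<in> K")
    case False
    with assms(2) that show ?thesis
      by (elim C_set_clopen_neighbourhood_avoiding) (auto simp: \<G>_def)
  next
    case True
    then have "x \<notin> L"
      using assms(4) by blast
    with assms(3) that show ?thesis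
      by (elim C_set_clopen_neighbourhood_avoiding) (auto simp: \<G>_def)
  qed
  then have "topspace X \<subseteq> \<Union>\<G>"
    by blast
  moreover have "\<forall>G\<in>\<G>. openin X G"
    unfolding \<G>_def by blast
  ultimately obtain \<G>' where "countable \<G>'" and "\<G>' \<subseteq> \<G>" and "topspace X \<subseteq> \<Union>\<G>'"
    using Lindelof_space_alt[THEN iffD1, OF assms(1), rule_format, of \<G>] by blast
  moreover have clopen_\<G>': "closedin X G \<and> openin X G" if "G \<in> \<G>'" for G
    using that \<open>\<G>' \<subseteq> \<G>\<close> unfolding \<G>_def by blast
  ultimately have "\<Union>\<G>' = topspace X"
    using openin_subset by blast
  obtain \<P> where clopen: "\<And>P. P \<in> \<P> \<Longrightarrow> closedin X P \<and> openin X P"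
    and "disjoint \<P>" and cover: "\<Union>\<P> = topspace X" and refines: "\<And>P. P \<in> \<P> \<Longrightarrow> \<exists>G\<in>\<G>'. P \<subseteq> G"
    using countable_clopen_cover_refines_to_partition[of \<G>' X] clopen_\<G>' \<open>countable \<G>'\<close>
      \<open>\<Union>\<G>' = topspace X\<close> by blast
  show thesis
  proof (rule that)
    show "closedin X (\<Union>{P\<in>\<P>. P \<inter> L = {}})"
      using clopen \<open>disjoint \<P>\<close> cover by (intro closedin_Union_open_partition) auto
    show "openin X (\<Union>{P\<in>\<P>. P \<inter> L = {}})"
      using clopen by (intro openin_Union) auto
    show "K \<subseteq> \<Union>{P\<in>\<P>. P \<inter> L = {}}"
    proof
      fix x
      assume "x \<in> K"
      then obtain P where "P \<in> \<P>" and "x \<in> P"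
        using assms(2) cover unfolding C_set_iff_clopen_separation by blast
      then obtain G where "G \<in> \<G>" and "P \<subseteq> G"
        using refines \<open>\<G>' \<subseteq> \<G>\<close> by blast
      then have "G \<inter> L = {}"
        using \<open>x \<in> K\<close> \<open>x \<in> P\<close> unfolding \<G>_def by blast
      then show "x \<in> \<Union>{P\<in>\<P>. P \<inter> L = {}}"
        using \<open>P \<in> \<P>\<close> \<open>P \<subseteq> G\<close> \<open>x \<in> P\<close> by blast
    qed
  qed blast
qed

lemma Lindelof_space_clopen_separation_of_C_set_sequences:
  fixes b v :: "nat \<Rightarrow> 'a set"
  assumes "Lindelof_space X" and "\<And>m. C_set X (b m)" and "\<And>k. C_set X (v k)"
    and "\<And>m k. b m \<inter> v k = {}"
  obtains D where "\<And>m. closedin X (D m)" and "\<And>m. openin X (D m)" and "\<And>m. b m \<subseteq> D m"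
    and "\<And>k m. k \<le> m \<Longrightarrow> D m \<inter> v k = {}"
proof -
  have "\<exists>E. closedin X E \<and> openin X E \<and> b m \<subseteq> E \<and> E \<inter> v k = {}" for m k
    by (rule Lindelof_space_clopen_separation_of_C_sets[OF assms]) blast
  then obtain E where E: "\<And>m k. closedin X (E m k) \<and> openin X (E m k) \<and> b m \<subseteq> E m k \<and> E m k \<inter> v k = {}"
    by (metis (no_types))
  show thesis
  proof (rule that[of "\<lambda>m. \<Inter>k\<le>m. E m k"])
    show "closedin X (\<Inter>k\<le>m. E m k)" and "openin X (\<Inter>k\<le>m. E m k)" for m
      using E by (auto intro!: closedin_Inter openin_Inter)
    show "b m \<subseteq> (\<Inter>k\<le>m. E m k)" for m
      using E by blast
    show "(\<Inter>k\<le>m. E m k) \<inter> v k = {}" if "k \<le> m" for k m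
      using E that by blast
  qed
qed

lemma second_countable_countable_interior_subcover:
  assumes "second_countable X" and "S \<subseteq> (\<Union>V\<in>\<V>. X interior_of V)"
  obtains \<V>' where "countable \<V>'" and "\<V>' \<subseteq> \<V>" and "S \<subseteq> (\<Union>V\<in>\<V>'. X interior_of V)"
proof -
  have "Lindelof_space (subtopology X S)"
    using assms(1) by (simp add: second_countable_imp_Lindelof_space second_countable_subtopology)
  moreover have "topspace X \<inter> S \<subseteq> \<Union>((interior_of) X ` \<V>)"
    using assms(2) by blast
  moreover have "\<forall>U \<in> (interior_of) X ` \<V>. openin X U"
    by auto
  ultimately obtain \<W> where "countable \<W>" "\<W> \<subseteq> (interior_of) X ` \<V>" "topspace X \<inter> S \<subseteq> \<Union>\<W>"
    using Lindelof_space_subtopology[THEN iffD1, rule_format, of X S "(interior_of) X ` \<V>"]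
    by blast
  then obtain \<V>' where "countable \<V>'" "\<V>' \<subseteq> \<V>" "\<W> = (interior_of) X ` \<V>'"
    using countable_subset_image[of \<W> "(interior_of) X" \<V>] by blast
  moreover have "S \<subseteq> topspace X"
    using assms(2) interior_of_subset_topspace[of X] by blast
  ultimately have "S \<subseteq> (\<Union>V\<in>\<V>'. X interior_of V)"
    using \<open>topspace X \<inter> S \<subseteq> \<Union>\<W>\<close> by blast
  with \<open>countable \<V>'\<close> \<open>\<V>' \<subseteq> \<V>\<close> show thesis
    by (rule that)
qed

lemma almost_zero_dimensional_C_set_sequence:
  assumes "second_countable X" and "almost_zero_dimensional X" and "openin X U" and "x \<in> U"
  obtains v :: "nat \<Rightarrow> 'a set" where "\<And>k. C_set X (v k) \<and> v k \<subseteq> U" and "x \<in> v 0"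
    and "U \<subseteq> (\<Union>k. X interior_of v k)"
proof -
  define \<V> where "\<V> = {V. C_set X V \<and> V \<subseteq> U}"
  have nbhd: "\<exists>V\<in>\<V>. z \<in> X interior_of V" if "z \<in> U" for z
  proof -
    have "z \<in> topspace X"
      using assms(3) that openin_subset by blast
    then show ?thesis
      using assms(2,3) that unfolding almost_zero_dimensional_def \<V>_def by blast
  qed
  then obtain V\<^sub>0 where "V\<^sub>0 \<in> \<V>" and "x \<in> X interior_of V\<^sub>0"
    using assms(4) by blast
  have "U \<subseteq> (\<Union>V\<in>\<V>. X interior_of V)"
    using nbhd by blast
  with assms(1) obtain \<V>' where "countable \<V>'" and "\<V>' \<subseteq> \<V>"
    and cover: "U \<subseteq> (\<Union>V\<in>\<V>'. X interior_of V)"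
    by (rule second_countable_countable_interior_subcover)
  then have "\<V>' \<noteq> {}"
    using assms(4) by blast
  define v where "v = case_nat V\<^sub>0 (from_nat_into \<V>')"
  have v_in: "v k \<in> insert V\<^sub>0 \<V>'" for k
    using \<open>\<V>' \<noteq> {}\<close> by (cases k) (auto simp: v_def from_nat_into)
  have "V = v (Suc (to_nat_on \<V>' V))" if "V \<in> \<V>'" for V
    using \<open>countable \<V>'\<close> that by (simp add: v_def from_nat_into_to_nat_on)
  then have "\<V>' \<subseteq> range v"
    by blast
  show thesis
  proof (rule that)
    show "C_set X (v k) \<and> v k \<subseteq> U" for k
      using v_in[of k] \<open>V\<^sub>0 \<in> \<V>\<close> \<open>\<V>' \<subseteq> \<V>\<close> unfolding \<V>_def by blast
    show "x \<in> v 0"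
      using \<open>x \<in> X interior_of V\<^sub>0\<close> interior_of_subset by (fastforce simp: v_def)
    show "U \<subseteq> (\<Union>k. X interior_of v k)"
      using cover \<open>\<V>' \<subseteq> range v\<close> by blast
  qed
qed

lemma closedin_Un_UN_locally_finite_sequence:
  fixes D V :: "nat \<Rightarrow> 'a set"
  assumes "closedin X C" and "\<And>m. closedin X (D m)" and "\<And>k. openin X (V k)"
    and "\<And>k m. k \<le> m \<Longrightarrow> D m \<inter> V k = {}" and "topspace X - C \<subseteq> (\<Union>k. V k)"
  shows "closedin X (C \<union> (\<Union>m. D m))"
proof -
  have "openin X (topspace X - (C \<union> (\<Union>m. D m)))"
  proof (subst openin_subopen, intro ballI)
    fix z
    assume z: "z \<in> topspace X - (C \<union> (\<Union>m. D m))"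
    then obtain k where "z \<in> V k"
      using assms(5) by blast
    \<comment> \<open>Near \<open>z\<close> only the finitely many \<open>D m\<close> with \<open>m < k\<close> can meet \<open>V k\<close>.\<close>
    define T where "T = (topspace X - C) \<inter> (V k - \<Union>(D ` {..<k}))"
    have "openin X T"
      unfolding T_def using assms(1-3)
      by (intro openin_Int openin_diff closedin_Union finite_imageI) (auto simp: openin_diff)
    moreover have "z \<in> T"
      using z \<open>z \<in> V k\<close> unfolding T_def by blast
    moreover have "T \<inter> D m = {}" for m
      using assms(4)[of k m] unfolding T_def by (cases "m < k") auto
    then have "T \<subseteq> topspace X - (C \<union> (\<Union>m. D m))"
      unfolding T_def by blast
    ultimately show "\<exists>T. openin X T \<and> z \<in> T \<and> T \<subseteq> topspace X - (C \<union> (\<Union>m. D m))"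
      by blast
  qed
  moreover have "C \<union> (\<Union>m. D m) \<subseteq> topspace X"
    using assms(1,2) closedin_subset by blast
  ultimately show ?thesis
    by (simp add: closedin_def)
qed

lemma clopen_superset_of_closure_avoiding_point:
  assumes "second_countable X" and "almost_zero_dimensional X" and "sigmaC_set X B"
    and "X frontier_of A \<subseteq> B" and "B \<subseteq> X closure_of A"
    and "x \<in> topspace X - X closure_of A"
  obtains W where "closedin X W" and "openin X W" and "X closure_of A \<subseteq> W" and "x \<notin> W"
proof -
  define F where "F = X closure_of A"
  have "openin X (topspace X - F)"
    unfolding F_def by (intro openin_diff) auto
  moreover have "x \<in> topspace X - F"
    using assms(6) unfolding F_def .
  ultimately obtain v :: "nat \<Rightarrow> 'a set" where v: "\<And>k. C_set X (v k) \<and> v k \<subseteq> topspace X - F"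
    and "x \<in> v 0" and v_cover: "topspace X - F \<subseteq> (\<Union>k. X interior_of v k)"
    by (rule almost_zero_dimensional_C_set_sequence[OF assms(1,2)]) blast
  obtain b :: "nat \<Rightarrow> 'a set" where b: "\<And>m. C_set X (b m)" and B: "B = (\<Union>m. b m)"
    by (rule sigmaC_set_range[OF assms(3)]) blast
  have "Lindelof_space X"
    using assms(1) by (rule second_countable_imp_Lindelof_space)
  moreover have "b m \<inter> v k = {}" for m k
    using v[of k] B assms(5) unfolding F_def by blast
  ultimately obtain D where D: "\<And>m. closedin X (D m)" "\<And>m. openin X (D m)" "\<And>m. b m \<subseteq> D m"
    and D_v: "\<And>k m. k \<le> m \<Longrightarrow> D m \<inter> v k = {}"
    using Lindelof_space_clopen_separation_of_C_set_sequences[of X b v] b v by blast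
  define W where "W = F \<union> (\<Union>m. D m)"
  have "B \<subseteq> (\<Union>m. D m)"
    unfolding B using D(3) by blast
  then have "W = X interior_of A \<union> (\<Union>m. D m)"
    using assms(4) unfolding W_def F_def interior_of_union_frontier_of[symmetric] by blast
  moreover have "openin X (X interior_of A \<union> (\<Union>m. D m))"
    using D(2) by (intro openin_Un openin_interior_of openin_Union) auto
  ultimately have "openin X W"
    by simp
  moreover have "closedin X W"
    unfolding W_def
  proof (rule closedin_Un_UN_locally_finite_sequence[where V = "\<lambda>k. X interior_of v k"])
    show "D m \<inter> X interior_of v k = {}" if "k \<le> m" for k m
      using D_v[OF that] interior_of_subset[of X "v k"] by blast
  qed (use D(1) v_cover in \<open>simp_all add: F_def\<close>)
  moreover have "x \<notin> W"
    using \<open>x \<in> topspace X - F\<close> \<open>x \<in> v 0\<close> D_v[of 0] unfolding W_def by blast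
  moreover have "F \<subseteq> W"
    unfolding W_def by blast
  ultimately show thesis
    using that unfolding F_def by blast
qed

theorem theorem4p3:
  fixes X :: "'a topology" and A B :: "'a set"
  assumes "separable_space X" and "metrizable_space X"
    and "almost_zero_dimensional X"
    and "A \<subseteq> topspace X"
    and "sigmaC_set X B"
    and "X frontier_of A \<subseteq> B" and "B \<subseteq> X closure_of A"
  shows "C_set X (X closure_of A)"
proof -
  have "second_countable X"
    using assms(1,2) by (rule separable_metrizable_imp_second_countable)
  then show ?thesis
    unfolding C_set_iff_clopen_separation
    using clopen_superset_of_closure_avoiding_point[OF _ assms(3,5-7)]
    by (metis closure_of_subset_topspace)
qed

end
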